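(* Every deterministic mechanism for locating one facility on $[0,1]$ that is anonymous, Pareto efficient and strategy proof has approximation ratio at least $\frac{6}{5}$ for the complemented Gini index of utilities.
   Context: Agents $1,\dots,n$ report locations $x_1,\dots,x_n\in[0,1]$; a deterministic mechanism $f$ maps each profile (for each $n$) to a facility location $y=f(x_1,\dots,x_n)\in[0,1]$. Agent $i$'s distance is $d_i=|x_i-y|$, utility $u_i=1-d_i$. The Gini index of utilities is $G_u=\frac{\sum_i\sum_j|u_i-u_j|}{2n\sum_i u_i}$ and the complemented Gini index is $1-G_u$. $f$ is anonymous if permuting the reports does not change the output; Pareto efficient if for no profile is there a location $z$ with $|x_j-z|\le|x_j-f(x)|$ for all $j$ and strict inequality for some $i$; strategy proof if no agent $i$ can report some $x_i'$ and obtain $|x_i-f(x_1,\dots,x_i',\dots,x_n)|<|x_i-f(x)|$. The approximation ratio of $f$ is the supremum over all profiles $x$ of $\mathrm{OPT}(x)/(1-G_u(f(x)))$, where $\mathrm{OPT}(x)$ is the maximum of $1-G_u$ over all facility locations in $[0,1]$. *)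

theory Defs
  imports "HOL-Analysis.Analysis"
begin

definition profile :: "real list \<Rightarrow> bool" where
  "profile xs \<longleftrightarrow> xs \<noteq> [] \<and> (\<forall>x\<in>set xs. x \<in> {0..1})"

definition utilities :: "real list \<Rightarrow> real \<Rightarrow> real list" where
  "utilities xs y = map (\<lambda>x. 1 - \<bar>x - y\<bar>) xs"

definition gini :: "real list \<Rightarrow> real" where
  "gini us = (\<Sum>i<length us. \<Sum>j<length us. \<bar>us!i - us!j\<bar>)
              / (2 * real (length us) * sum_list us)"

definition comp_gini :: "real list \<Rightarrow> real \<Rightarrow> real" where
  "comp_gini xs y = 1 - gini (utilities xs y)"

definition OPT :: "real list \<Rightarrow> real" where
  "OPT xs = (SUP y\<in>{0..1}. comp_gini xs y)"

definition mechanism :: "(real list \<Rightarrow> real) \<Rightarrow> bool" where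
  "mechanism f \<longleftrightarrow> (\<forall>xs. profile xs \<longrightarrow> f xs \<in> {0..1})"

definition anonymous :: "(real list \<Rightarrow> real) \<Rightarrow> bool" where
  "anonymous f \<longleftrightarrow> (\<forall>xs ys. profile xs \<longrightarrow> mset ys = mset xs \<longrightarrow> f ys = f xs)"

definition pareto_efficient :: "(real list \<Rightarrow> real) \<Rightarrow> bool" where
  "pareto_efficient f \<longleftrightarrow> (\<forall>xs. profile xs \<longrightarrow>
     \<not> (\<exists>z\<in>{0..1}. (\<forall>j<length xs. \<bar>xs!j - z\<bar> \<le> \<bar>xs!j - f xs\<bar>)
                     \<and> (\<exists>i<length xs. \<bar>xs!i - z\<bar> < \<bar>xs!i - f xs\<bar>)))"

definition strategy_proof :: "(real list \<Rightarrow> real) \<Rightarrow> bool" where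
  "strategy_proof f \<longleftrightarrow> (\<forall>xs i x'. profile xs \<longrightarrow> i < length xs \<longrightarrow> x' \<in> {0..1} \<longrightarrow>
     \<not> (\<bar>xs!i - f (xs[i := x'])\<bar> < \<bar>xs!i - f xs\<bar>))"

definition approx_ratio :: "(real list \<Rightarrow> real) \<Rightarrow> ereal" where
  "approx_ratio f = (SUP xs\<in>{xs. profile xs}. ereal (OPT xs / comp_gini xs (f xs)))"

end

theory Submission
  imports Defs
begin

text \<open>Two agents suffice. Let p be the outcome for the reports 0 and 1. If p \<le> 1/2, an agent
  at p facing an agent at 1 can report 0 and get exactly p, so strategy proofness forces the
  facility onto p; symmetrically, if p > 1/2 the profile (0, p) must be served at p. In either case
  the facility sits on one agent while the other is at distance d \<ge> 1/2. Equal utilities at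
  the midpoint give OPT = 1, whereas the outcome has complemented Gini index
  (4 - 3d) / (2(2 - d)), so the ratio is 2(2 - d)/(4 - 3d) \<ge> 6/5.\<close>

lemma gini_nonneg:
  assumes "\<forall>u\<in>set us. 0 \<le> u"
  shows "0 \<le> gini us"
  unfolding gini_def using assms
  by (intro divide_nonneg_nonneg sum_nonneg mult_nonneg_nonneg sum_list_nonneg) auto

lemma gini_pair: "gini [u, v] = \<bar>u - v\<bar> / (2 * (u + v))"
proof -
  have "gini [u, v] = (2 * \<bar>u - v\<bar>) / (2 * (2 * (u + v)))"
    unfolding gini_def by (simp add: numeral_2_eq_2 lessThan_Suc abs_minus_commute algebra_simps)
  then show ?thesis
    by (metis mult_divide_mult_cancel_left_if zero_neq_numeral)
qed

lemma comp_gini_le_one: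
  assumes "profile xs" "y \<in> {0..1}"
  shows "comp_gini xs y \<le> 1"
proof -
  have "\<forall>u\<in>set (utilities xs y). 0 \<le> u"
    using assms by (auto simp: profile_def utilities_def abs_if)
  then show ?thesis
    unfolding comp_gini_def using gini_nonneg by simp
qed

lemma OPT_pair:
  assumes "a \<in> {0..1}" "b \<in> {0..1}"
  shows "OPT [a, b] = 1"
  unfolding OPT_def
proof (rule cSup_eq_maximum)
  let ?m = "(a + b) / 2"
  have "\<bar>a - ?m\<bar> = \<bar>b - ?m\<bar>"
    by (simp add: abs_if field_simps)
  then have "comp_gini [a, b] ?m = 1"
    by (simp add: comp_gini_def utilities_def gini_pair)
  moreover have "?m \<in> {0..1}"
    using assms by auto
  ultimately show "1 \<in> comp_gini [a, b] ` {0..1}"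
    by (metis image_eqI)
  have "profile [a, b]"
    using assms by (simp add: profile_def)
  then show "z \<le> 1" if "z \<in> comp_gini [a, b] ` {0..1}" for z
    using that comp_gini_le_one by blast
qed

lemma comp_gini_pair_at_agent:
  assumes "a \<in> {0..1}" "b \<in> {0..1}" "y \<in> {a, b}"
  shows "comp_gini [a, b] y = (4 - 3 * \<bar>a - b\<bar>) / (2 * (2 - \<bar>a - b\<bar>))"
proof -
  have "2 - \<bar>a - b\<bar> > 0"
    using assms by (auto simp: abs_if)
  with assms show ?thesis
    by (auto simp: comp_gini_def utilities_def gini_pair abs_minus_commute field_simps)
qed

lemma approx_ratio_ge:
  assumes "profile xs"
  shows "ereal (OPT xs / comp_gini xs (f xs)) \<le> approx_ratio f"
  unfolding approx_ratio_def using assms by (intro SUP_upper) simp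

lemma strategy_proof_keeps_ideal_outcome:
  assumes "strategy_proof f" "profile xs" "i < length xs" "x' \<in> {0..1}"
    and "f (xs[i := x']) = xs ! i"
  shows "f xs = xs ! i"
  using assms unfolding strategy_proof_def by force

lemma approx_ratio_ge_far_pair:
  assumes "a \<in> {0..1}" "b \<in> {0..1}" "f [a, b] \<in> {a, b}" "1/2 \<le> \<bar>a - b\<bar>"
  shows "ereal (6/5) \<le> approx_ratio f"
proof -
  let ?d = "\<bar>a - b\<bar>"
  have "?d \<le> 1"
    using assms by (auto simp: abs_if)
  then have "6/5 \<le> 1 / ((4 - 3 * ?d) / (2 * (2 - ?d)))"
    using assms(4) by (simp add: field_simps)
  also have "\<dots> = OPT [a, b] / comp_gini [a, b] (f [a, b])"
    using assms by (simp add: OPT_pair comp_gini_pair_at_agent)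
  finally have "ereal (6/5) \<le> ereal (OPT [a, b] / comp_gini [a, b] (f [a, b]))"
    by simp
  also have "\<dots> \<le> approx_ratio f"
    using assms by (intro approx_ratio_ge) (simp add: profile_def)
  finally show ?thesis .
qed

theorem theorem5:
  fixes f :: "real list \<Rightarrow> real"
  assumes "mechanism f" and "anonymous f" and "pareto_efficient f" and "strategy_proof f"
  shows "approx_ratio f \<ge> ereal (6/5)"
proof -
  define p where "p = f [0, 1]"
  have p: "p \<in> {0..1}"
    using assms(1) unfolding mechanism_def p_def by (simp add: profile_def)
  show ?thesis
  proof (cases "p \<le> 1/2")
    case True
    have "f [p, 1] = p"
      using strategy_proof_keeps_ideal_outcome[OF assms(4), of "[p, 1]" 0 0] p
      by (simp add: profile_def p_def)
    with p True show ?thesis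
      by (intro approx_ratio_ge_far_pair[of p 1]) auto
  next
    case False
    have "f [0, p] = p"
      using strategy_proof_keeps_ideal_outcome[OF assms(4), of "[0, p]" 1 1] p
      by (simp add: profile_def p_def)
    with p False show ?thesis
      by (intro approx_ratio_ge_far_pair[of 0 p]) auto
  qed
qed

end
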